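(* Let $X\in\mathbb{R}^{N\times d}$ have rows ${\bm{x}}_1^\top,\dots,{\bm{x}}_N^\top$, let $Y\in\mathbb{R}^N$, $\mathbf{B}_0\in\mathbb{R}^{h\times d}$, ${\bm{v}}_0\in\mathbb{R}^h$, ${\bm{q}}_0=X\mathbf{B}_0^\top{\bm{v}}_0$, ${\bm{b}}_0=\mathrm{vec}(\mathbf{B}_0)$, and let $\nabla_{{\bm{b}}}{\bm{q}}_0\in\mathbb{R}^{N\times hd}$ be the Jacobian whose $n$-th row is $\mathrm{vec}({\bm{v}}_0{\bm{x}}_n^\top)^\top$. Let $\mathcal{K}_0=X(\mathbf{B}_0^\top\mathbf{B}_0+\|{\bm{v}}_0\|_2^2 I_{d\times d})X^\top$, assumed invertible, and let $C_1=\mathcal{K}_0^{-1}$. Define $\mathbf{B}_t$ by ${\bm{b}}_t=\mathrm{vec}(\mathbf{B}_t)={\bm{b}}_0-(\nabla_{{\bm{b}}}{\bm{q}}_0)^\top\mathcal{K}_0^{-1}({\bm{q}}_0-Y)$. Then $\mathrm{tr}(\mathbf{B}_0^\top\mathbf{B}_t)={\bm{b}}_0^\top{\bm{b}}_0-{\bm{q}}_0^\top C_1({\bm{q}}_0-Y)$, and, regarding this expression as a function of ${\bm{q}}_0\in\mathbb{R}^N$ with ${\bm{b}}_0^\top{\bm{b}}_0$ and $C_1$ held fixed, ${\bm{q}}_0^*=\tfrac12 Y$ is a maximum of $\mathrm{tr}(\mathbf{B}_0^\top\mathbf{B}_t)$.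
   Context: Setting: overparameterized two-layer linear regression with loss $\frac12\|X\mathbf{B}^\top{\bm{v}}-Y\|_2^2$, backbone $\mathbf{B}\in\mathbb{R}^{h\times d}$ and linear head ${\bm{v}}\in\mathbb{R}^h$; $\mathbf{B}_0,{\bm{v}}_0$ are the parameters at the start of finetuning and ${\bm{b}}_t$ is the converged backbone obtained from the neural tangent kernel (linearized) approximation of gradient-descent training, with $\mathcal{K}_0$ the empirical NTK on $X$. $\mathrm{vec}$ denotes column-stacking vectorization. *)

theory Defs
  imports "HOL-Analysis.Analysis"
begin

text \<open>The ordering of coordinates (column stacking) is immaterial
  for a type-indexed vector; the bijection below is the vec operator.\<close>
definition vecm :: "real^'d^'h \<Rightarrow> real^('h \<times> 'd)" where
  "vecm B = (\<chi> p. B $ fst p $ snd p)"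

definition unvecm :: "real^('h \<times> 'd) \<Rightarrow> real^'d^'h" where
  "unvecm b = (\<chi> i j. b $ (i, j))"

end

theory Submission
  imports Defs
begin

text \<open>The vector \<open>vec(B\<^sub>t) = b\<^sub>0 - J\<^sup>T C\<^sub>1 (q\<^sub>0 - Y)\<close> pairs with \<open>b\<^sub>0\<close> through
  \<open>tr(B\<^sub>0\<^sup>T B\<^sub>t) = b\<^sub>0 \<bullet> vec(B\<^sub>t)\<close>, and \<open>J b\<^sub>0 = q\<^sub>0\<close> because \<open>q\<^sub>0\<close> is linear in \<open>B\<^sub>0\<close>; this gives the
  closed form.  The kernel \<open>K\<^sub>0 = X (B\<^sub>0\<^sup>T B\<^sub>0 + \<parallel>v\<^sub>0\<parallel>\<^sup>2 I) X\<^sup>T\<close> is positive semidefinite, hence so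
  is \<open>C\<^sub>1 = K\<^sub>0\<^sup>-\<^sup>1\<close>, and completing the square,
  \<open>q \<bullet> C\<^sub>1 (q - Y) = (q - Y/2) \<bullet> C\<^sub>1 (q - Y/2) - (Y/2) \<bullet> C\<^sub>1 (Y/2)\<close>, shows that the trace is
  maximal at \<open>q = Y/2\<close>.\<close>

definition psd_matrix :: "real^'n^'n \<Rightarrow> bool" where
  "psd_matrix A \<longleftrightarrow> transpose A = A \<and> (\<forall>x. 0 \<le> x \<bullet> (A *v x))"

lemma inner_transpose_matrix_vector: "(transpose A *v x) \<bullet> y = x \<bullet> (A *v y)"
  for A :: "real^'n^'m"
  by (simp add: dot_lmul_matrix)

lemma symmetric_matrix_inner_commute:
  fixes A :: "real^'n^'n"
  assumes "transpose A = A"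
  shows "(A *v x) \<bullet> y = x \<bullet> (A *v y)"
  by (metis assms inner_transpose_matrix_vector)

lemma psd_matrix_add: "psd_matrix A \<Longrightarrow> psd_matrix B \<Longrightarrow> psd_matrix (A + B)"
  by (simp add: psd_matrix_def transpose_def vec_eq_iff matrix_vector_mult_add_rdistrib
      inner_add_right add_nonneg_nonneg)

lemma psd_matrix_gram: "psd_matrix (transpose B ** B)"
  for B :: "real^'n^'m"
proof -
  have "x \<bullet> ((transpose B ** B) *v x) = (B *v x) \<bullet> (B *v x)" for x
    by (metis inner_commute inner_transpose_matrix_vector matrix_vector_mul_assoc)
  then show ?thesis
    by (simp add: psd_matrix_def matrix_transpose_mul)
qed

lemma psd_matrix_scaleR_mat_1: "0 \<le> c \<Longrightarrow> psd_matrix (c *\<^sub>R mat 1 :: real^'n^'n)"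
  by (simp add: psd_matrix_def transpose_scalar flip: scaleR_matrix_vector_assoc)

lemma psd_matrix_congruence:
  fixes M :: "real^'m^'m" and X :: "real^'m^'n"
  assumes "psd_matrix M"
  shows "psd_matrix (X ** M ** transpose X)"
  unfolding psd_matrix_def
proof
  show "transpose (X ** M ** transpose X) = X ** M ** transpose X"
    using assms by (simp add: psd_matrix_def matrix_transpose_mul matrix_mul_assoc)
  show "\<forall>x. 0 \<le> x \<bullet> ((X ** M ** transpose X) *v x)"
  proof
    fix x
    have "x \<bullet> ((X ** M ** transpose X) *v x) = (transpose X *v x) \<bullet> (M *v (transpose X *v x))"
      by (metis inner_commute inner_transpose_matrix_vector matrix_vector_mul_assoc)
    then show "0 \<le> x \<bullet> ((X ** M ** transpose X) *v x)"
      using assms by (simp add: psd_matrix_def del: transpose_matrix_vector)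
  qed
qed

lemma matrix_inv_right: "invertible A \<Longrightarrow> A ** matrix_inv A = mat 1"
  unfolding invertible_def matrix_inv_def by (rule someI2_ex) auto

lemma psd_matrix_inv:
  fixes A :: "real^'n^'n"
  assumes "invertible A" and "psd_matrix A"
  shows "psd_matrix (matrix_inv A)"
  unfolding psd_matrix_def
proof
  let ?C = "matrix_inv A"
  have AC: "A ** ?C = mat 1" and AT: "transpose A = A"
    using assms by (simp_all add: matrix_inv_right psd_matrix_def)
  have "transpose ?C = transpose ?C ** (A ** ?C)"
    by (simp add: AC)
  also have "\<dots> = transpose (A ** ?C) ** ?C"
    by (simp add: matrix_transpose_mul AT matrix_mul_assoc)
  finally show "transpose ?C = ?C"
    by (simp add: AC)
  show "\<forall>y. 0 \<le> y \<bullet> (?C *v y)"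
  proof
    fix y
    have "y \<bullet> (?C *v y) = (?C *v y) \<bullet> (A *v (?C *v y))"
      by (simp add: matrix_vector_mul_assoc AC inner_commute)
    then show "0 \<le> y \<bullet> (?C *v y)"
      using assms(2) by (simp add: psd_matrix_def)
  qed
qed

lemma psd_matrix_quadratic_min_at_half:
  fixes C :: "real^'n^'n"
  assumes "psd_matrix C"
  shows "((1/2) *\<^sub>R Y) \<bullet> (C *v ((1/2) *\<^sub>R Y - Y)) \<le> q \<bullet> (C *v (q - Y))"
proof -
  define w where "w = (1/2) *\<^sub>R Y"
  have Y_eq: "Y = 2 *\<^sub>R w"
    by (simp add: w_def)
  have sym: "w \<bullet> (C *v q) = q \<bullet> (C *v w)"
    using assms by (metis inner_commute psd_matrix_def symmetric_matrix_inner_commute)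
  have "q \<bullet> (C *v (q - Y)) - w \<bullet> (C *v (w - Y)) = (q - w) \<bullet> (C *v (q - w))"
    unfolding Y_eq using sym
    by (simp add: matrix_vector_mult_diff_distrib inner_diff_left inner_diff_right
        matrix_vector_mult_scaleR)
  moreover have "0 \<le> (q - w) \<bullet> (C *v (q - w))"
    using assms by (simp add: psd_matrix_def)
  ultimately show ?thesis
    by (simp add: w_def)
qed

lemma trace_transpose_mult_unvecm:
  fixes A :: "real^'d^'h"
  shows "trace (transpose A ** unvecm b) = vecm A \<bullet> b"
proof -
  have "trace (transpose A ** unvecm b) = (\<Sum>j\<in>UNIV. \<Sum>i\<in>UNIV. A $ i $ j * b $ (i, j))"
    by (simp add: trace_def matrix_matrix_mult_def transpose_def unvecm_def)
  also have "\<dots> = (\<Sum>i\<in>UNIV. \<Sum>j\<in>UNIV. A $ i $ j * b $ (i, j))"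
    by (rule sum.swap)
  also have "\<dots> = (\<Sum>p\<in>UNIV. A $ fst p $ snd p * b $ p)"
    by (simp add: sum.cartesian_product case_prod_beta flip: UNIV_Times_UNIV)
  finally show ?thesis
    by (simp add: inner_vec_def vecm_def)
qed

text \<open>The rows \<open>vec(v x\<^sub>n\<^sup>T)\<close> form the Jacobian of \<open>B \<mapsto> X B\<^sup>T v\<close>; since this map is linear,
  the Jacobian applied to \<open>vec B\<close> returns its value at \<open>B\<close>.\<close>

lemma outer_product_rows_mult_vecm:
  fixes X :: "real^'d^'n" and B :: "real^'d^'h" and v :: "real^'h"
  shows "(\<chi> n. vecm (\<chi> i j. v $ i * X $ n $ j)) *v vecm B = X *v (transpose B *v v)"
proof -
  have "(\<Sum>p\<in>UNIV. v $ fst p * X $ n $ snd p * B $ fst p $ snd p)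
      = (\<Sum>j\<in>UNIV. \<Sum>i\<in>UNIV. v $ i * X $ n $ j * B $ i $ j)" for n
  proof -
    have "(\<Sum>p\<in>UNIV. v $ fst p * X $ n $ snd p * B $ fst p $ snd p)
        = (\<Sum>i\<in>UNIV. \<Sum>j\<in>UNIV. v $ i * X $ n $ j * B $ i $ j)"
      by (simp add: sum.cartesian_product case_prod_beta flip: UNIV_Times_UNIV)
    also have "\<dots> = (\<Sum>j\<in>UNIV. \<Sum>i\<in>UNIV. v $ i * X $ n $ j * B $ i $ j)"
      by (rule sum.swap)
    finally show ?thesis .
  qed
  then show ?thesis
    by (simp add: vec_eq_iff matrix_vector_mult_def vecm_def transpose_def
        sum_distrib_left mult_ac)
qed

theorem lemma2:
  fixes X :: "real^'d^'n" and Y :: "real^'n" and B0 :: "real^'d^'h" and v0 :: "real^'h"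
    and q0 :: "real^'n" and b0 :: "real^('h \<times> 'd)" and J :: "real^('h \<times> 'd)^'n"
    and K0 :: "real^'n^'n" and C1 :: "real^'n^'n" and Bt :: "real^'d^'h"
  defines "q0 \<equiv> X *v (transpose B0 *v v0)"
    and "b0 \<equiv> vecm B0"
    and "J \<equiv> (\<chi> n. vecm (\<chi> i j. v0 $ i * X $ n $ j))"
    and "K0 \<equiv> X ** (transpose B0 ** B0 + (norm v0)^2 *\<^sub>R mat 1) ** transpose X"
    and "C1 \<equiv> matrix_inv K0"
    and "Bt \<equiv> unvecm (b0 - transpose J *v (matrix_inv K0 *v (q0 - Y)))"
  assumes "invertible K0"
  shows "trace (transpose B0 ** Bt) = b0 \<bullet> b0 - q0 \<bullet> (C1 *v (q0 - Y))
     \<and> (\<forall>q :: real^'n. b0 \<bullet> b0 - q \<bullet> (C1 *v (q - Y))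
            \<le> b0 \<bullet> b0 - ((1/2) *\<^sub>R Y) \<bullet> (C1 *v ((1/2) *\<^sub>R Y - Y)))"
proof
  have "trace (transpose B0 ** Bt) = b0 \<bullet> (b0 - transpose J *v (C1 *v (q0 - Y)))"
    by (simp add: Bt_def b0_def C1_def trace_transpose_mult_unvecm del: transpose_matrix_vector)
  also have "\<dots> = b0 \<bullet> b0 - (J *v b0) \<bullet> (C1 *v (q0 - Y))"
    using inner_transpose_matrix_vector[of J "C1 *v (q0 - Y)" b0]
    by (simp add: inner_diff_right inner_commute del: transpose_matrix_vector)
  also have "J *v b0 = q0"
    by (simp add: J_def b0_def q0_def outer_product_rows_mult_vecm)
  finally show "trace (transpose B0 ** Bt) = b0 \<bullet> b0 - q0 \<bullet> (C1 *v (q0 - Y))" .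
next
  have "psd_matrix K0"
    unfolding K0_def
    by (intro psd_matrix_congruence psd_matrix_add psd_matrix_gram psd_matrix_scaleR_mat_1)
      simp
  then have "psd_matrix C1"
    unfolding C1_def using \<open>invertible K0\<close> by (simp add: psd_matrix_inv)
  then show "\<forall>q. b0 \<bullet> b0 - q \<bullet> (C1 *v (q - Y))
      \<le> b0 \<bullet> b0 - ((1/2) *\<^sub>R Y) \<bullet> (C1 *v ((1/2) *\<^sub>R Y - Y))"
    using psd_matrix_quadratic_min_at_half by fastforce
qed

end
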